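(* Let $\mathcal H=(\mathcal V,\mathcal E)$ be a hypergraph and $\vec x$ an optimal solution to the LP $\max\{\sum_ew_ex_e:\sum_{e\ni v}x_e\le1\ \forall v\in\mathcal V,\ \vec x\in[0,1]^{\mathcal E}\}$. Run the algorithm $\mathrm{HM}(\alpha)$ described in the context with $\alpha=1$. Then each edge $e$ is added to the output matching with probability at least $\frac{x_e}{k_e+1+o(k_e)}$, where $k_e=|e|$.
   Context: Algorithm $\mathrm{HM}(\alpha)$: for each edge $e$ generate an independent Bernoulli random variable $Y_e$ with mean $\alpha x_e$; assign to each edge an independent uniformly random number in $[0,1]$ and consider the edges in increasing order of these numbers; when considering $e$, add $e$ to the matching $\mathcal R$ iff $Y_e=1$ and $e$ is safe (no vertex of $e$ is already covered by an edge in $\mathcal R$); return $\mathcal R$. *)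

theory Defs
  imports "HOL-Probability.Probability" "HOL-Combinatorics.Multiset_Permutations"
          "HOL-Library.Landau_Symbols"
begin

definition hypergraph :: "nat set \<Rightarrow> nat set \<Rightarrow> (nat \<Rightarrow> nat set) \<Rightarrow> bool" where
  "hypergraph V E verts \<longleftrightarrow> finite V \<and> finite E \<and>
     (\<forall>e\<in>E. verts e \<subseteq> V \<and> verts e \<noteq> {})"

definition lp_feasible :: "nat set \<Rightarrow> nat set \<Rightarrow> (nat \<Rightarrow> nat set) \<Rightarrow> (nat \<Rightarrow> real) \<Rightarrow> bool" where
  "lp_feasible V E verts x \<longleftrightarrow>
     (\<forall>e\<in>E. 0 \<le> x e \<and> x e \<le> 1) \<and>
     (\<forall>v\<in>V. (\<Sum>e\<in>{e\<in>E. v \<in> verts e}. x e) \<le> 1)"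

definition lp_optimal :: "nat set \<Rightarrow> nat set \<Rightarrow> (nat \<Rightarrow> nat set) \<Rightarrow> (nat \<Rightarrow> real) \<Rightarrow> (nat \<Rightarrow> real) \<Rightarrow> bool" where
  "lp_optimal V E verts w x \<longleftrightarrow> lp_feasible V E verts x \<and>
     (\<forall>y. lp_feasible V E verts y \<longrightarrow> (\<Sum>e\<in>E. w e * y e) \<le> (\<Sum>e\<in>E. w e * x e))"

fun greedy :: "(nat \<Rightarrow> nat set) \<Rightarrow> (nat \<Rightarrow> bool) \<Rightarrow> nat list \<Rightarrow> nat set \<Rightarrow> nat set" where
  "greedy verts Y [] R = R"
| "greedy verts Y (e # es) R =
     greedy verts Y es
       (if Y e \<and> (\<forall>f\<in>R. verts f \<inter> verts e = {}) then insert e R else R)"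

text \<open>Algorithm HM(alpha): independent Bernoulli(alpha * x e) variables, and a
  uniformly random order of the edges (the order induced by i.i.d. uniform [0,1]
  labels, which is a uniformly random permutation almost surely).\<close>
definition HM :: "real \<Rightarrow> nat set \<Rightarrow> (nat \<Rightarrow> nat set) \<Rightarrow> (nat \<Rightarrow> real) \<Rightarrow> nat set pmf" where
  "HM \<alpha> E verts x =
     do { Y \<leftarrow> Pi_pmf E False (\<lambda>e. bernoulli_pmf (\<alpha> * x e));
          \<sigma> \<leftarrow> pmf_of_set (permutations_of_set E);
          return_pmf (greedy verts Y \<sigma> {}) }"

end

theory Submission
  imports Defs
begin

text \<open>Fix the coin flips Y with Y e and let T consist of e and its active neighbours, the
  edges f \<noteq> e with Y f meeting e. If e comes first among T in the random order, nothing
  conflicting with e has been taken when e is considered, so e is added; by symmetry this has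
  probability 1/(s+1), where s is the number of active neighbours. The convex function 1/(s+1)
  lies above its tangent at m, the expected value of s. Multiplied by the indicator of Y e, the
  tangent only involves products of two independent coin flips, so its expectation is
  x e/(m+1). Finally m \<le> |e|, since every neighbour meets e in some vertex and the LP
  constraint bounds the x-mass at each vertex by 1. So the bound holds with k+1 in place of
  k+1+o(k), and only feasibility of x is needed.\<close>

lemma measure_pmf_prob_bind_pmf:
  "measure_pmf.prob (bind_pmf M N) X = measure_pmf.expectation M (\<lambda>x. measure_pmf.prob (N x) X)"
proof -
  have "ennreal (measure_pmf.prob (bind_pmf M N) X) = emeasure (bind_pmf M N) X"
    by (simp add: measure_pmf.emeasure_eq_measure)
  also have "\<dots> = (\<integral>\<^sup>+x. emeasure (N x) X \<partial>M)"
    by (rule emeasure_bind_pmf)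
  also have "\<dots> = (\<integral>\<^sup>+x. ennreal (measure_pmf.prob (N x) X) \<partial>M)"
    by (simp add: measure_pmf.emeasure_eq_measure)
  also have "\<dots> = ennreal (measure_pmf.expectation M (\<lambda>x. measure_pmf.prob (N x) X))"
    by (rule nn_integral_eq_integral) (auto intro!: measure_pmf.integrable_const_bound[where B=1])
  finally show ?thesis
    by (simp add: Bochner_Integration.integral_nonneg)
qed

lemma expectation_prod_indicators_Pi_bernoulli:
  assumes "finite E" "S \<subseteq> E" "\<forall>a\<in>E. 0 \<le> p a \<and> p a \<le> 1"
  shows "measure_pmf.expectation (Pi_pmf E False (\<lambda>a. bernoulli_pmf (p a)))
           (\<lambda>Y. \<Prod>a\<in>S. if Y a then 1 else 0 :: real) = (\<Prod>a\<in>S. p a)"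
proof -
  define g where "g = (\<lambda>a (b::bool). if a \<in> S then (if b then 1 else 0::real) else 1)"
  have restrict: "(\<Prod>a\<in>E. g a (Y a)) = (\<Prod>a\<in>S. if Y a then 1 else 0 :: real)" for Y
    using prod.inter_restrict[OF assms(1), of "\<lambda>a. if Y a then 1 else 0 :: real" S] assms(2)
    by (simp add: g_def Int_absorb1)
  have factor: "measure_pmf.expectation (bernoulli_pmf (p a)) (g a) = (if a \<in> S then p a else 1)"
    if "a \<in> E" for a
  proof -
    have "measure_pmf.expectation (bernoulli_pmf (p a)) (g a) = (\<Sum>b\<in>UNIV. g a b * pmf (bernoulli_pmf (p a)) b)"
      by (rule integral_measure_pmf_real) auto
    then show ?thesis
      using assms(3) that by (auto simp: g_def UNIV_bool)
  qed
  have "measure_pmf.expectation (Pi_pmf E False (\<lambda>a. bernoulli_pmf (p a))) (\<lambda>Y. \<Prod>a\<in>E. g a (Y a))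
        = (\<Prod>a\<in>E. measure_pmf.expectation (bernoulli_pmf (p a)) (g a))"
    by (rule expectation_prod_Pi_pmf[OF assms(1)])
       (auto intro!: integrable_measure_pmf_finite simp: g_def)
  also have "\<dots> = (\<Prod>a\<in>E. if a \<in> S then p a else 1)"
    by (rule prod.cong) (simp_all add: factor)
  also have "\<dots> = (\<Prod>a\<in>S. p a)"
    using prod.inter_restrict[OF assms(1), of p S] assms(2) by (simp add: Int_absorb1)
  finally show ?thesis
    by (simp add: restrict)
qed

lemma integrable_Pi_bernoulli:
  fixes f :: "('a \<Rightarrow> bool) \<Rightarrow> real"
  assumes "finite E"
  shows "integrable (Pi_pmf E d (\<lambda>a. bernoulli_pmf (p a))) f"
  using assms by (intro integrable_measure_pmf_finite) (auto simp: set_Pi_pmf)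

lemma expectation_indicator_times_count_Pi_bernoulli:
  assumes "finite E" "e \<in> E" "N \<subseteq> E - {e}" "\<forall>a\<in>E. 0 \<le> p a \<and> p a \<le> 1"
  shows "measure_pmf.expectation (Pi_pmf E False (\<lambda>a. bernoulli_pmf (p a)))
           (\<lambda>Y. (if Y e then 1 else 0) * (\<Sum>f\<in>N. if Y f then 1 else 0 :: real))
         = p e * (\<Sum>f\<in>N. p f)"
proof -
  have "measure_pmf.expectation (Pi_pmf E False (\<lambda>a. bernoulli_pmf (p a)))
          (\<lambda>Y. (if Y e then 1 else 0) * (if Y f then 1 else 0 :: real)) = p e * p f"
    if "f \<in> N" for f
  proof -
    have "f \<in> E" "f \<noteq> e"
      using that assms(3) by auto
    then show ?thesis
      using expectation_prod_indicators_Pi_bernoulli[OF assms(1) _ assms(4), of "{e, f}"] assms(2)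
      by simp
  qed
  then show ?thesis
    by (simp add: sum_distrib_left Bochner_Integration.integral_sum integrable_Pi_bernoulli assms(1))
qed

definition first_in :: "'a set \<Rightarrow> 'a list \<Rightarrow> 'a" where
  "first_in T \<sigma> = hd (filter (\<lambda>a. a \<in> T) \<sigma>)"

lemma first_in_mem:
  assumes "\<sigma> \<in> permutations_of_set E" "T \<subseteq> E" "T \<noteq> {}"
  shows "first_in T \<sigma> \<in> T"
proof -
  have "filter (\<lambda>a. a \<in> T) \<sigma> \<noteq> []"
    using assms by (auto simp: permutations_of_set_def filter_empty_conv)
  then show ?thesis
    unfolding first_in_def using hd_in_set by fastforce
qed

lemma card_first_in_le:
  assumes "finite E" "T \<subseteq> E" "a \<in> T" "b \<in> T"
  shows "card {\<sigma>\<in>permutations_of_set E. first_in T \<sigma> = a}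
       \<le> card {\<sigma>\<in>permutations_of_set E. first_in T \<sigma> = b}"
proof -
  define \<tau> where "\<tau> = Transposition.transpose a b"
  have perm: "\<tau> permutes E"
    unfolding \<tau>_def using assms by (intro permutes_swap_id) auto
  have T_invariant: "(\<lambda>c. c \<in> T) \<circ> \<tau> = (\<lambda>c. c \<in> T)"
    using assms by (auto simp: \<tau>_def Transposition.transpose_def fun_eq_iff)
  have "map \<tau> ` {\<sigma>\<in>permutations_of_set E. first_in T \<sigma> = a}
        \<subseteq> {\<sigma>\<in>permutations_of_set E. first_in T \<sigma> = b}"
  proof (rule image_subsetI)
    fix \<sigma> assume "\<sigma> \<in> {\<sigma>\<in>permutations_of_set E. first_in T \<sigma> = a}"
    then have \<sigma>: "\<sigma> \<in> permutations_of_set E" "first_in T \<sigma> = a"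
      by simp_all
    have "filter (\<lambda>c. c \<in> T) \<sigma> \<noteq> []"
      using \<sigma> assms by (auto simp: permutations_of_set_def filter_empty_conv)
    then have "first_in T (map \<tau> \<sigma>) = b"
      using \<sigma>(2) by (simp add: first_in_def filter_map T_invariant hd_map) (simp add: \<tau>_def)
    then show "map \<tau> \<sigma> \<in> {\<sigma>\<in>permutations_of_set E. first_in T \<sigma> = b}"
      using \<sigma>(1) permutations_of_set_image_permutes[OF perm] by blast
  qed
  then have "card (map \<tau> ` {\<sigma>\<in>permutations_of_set E. first_in T \<sigma> = a})
             \<le> card {\<sigma>\<in>permutations_of_set E. first_in T \<sigma> = b}"
    using assms(1) by (intro card_mono) auto
  moreover have "inj (map \<tau>)"
    using permutes_inj[OF perm] by simp
  then have "card (map \<tau> ` {\<sigma>\<in>permutations_of_set E. first_in T \<sigma> = a})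
             = card {\<sigma>\<in>permutations_of_set E. first_in T \<sigma> = a}"
    by (intro card_image) (auto simp: inj_on_def)
  ultimately show ?thesis
    by simp
qed

lemma prob_first_in:
  assumes "finite E" "T \<subseteq> E" "e \<in> T"
  shows "measure_pmf.prob (pmf_of_set (permutations_of_set E)) {\<sigma>. first_in T \<sigma> = e}
         = 1 / real (card T)"
proof -
  define P where "P = permutations_of_set E"
  define C where "C = (\<lambda>a. {\<sigma>\<in>P. first_in T \<sigma> = a})"
  have "finite T"
    using assms finite_subset by blast
  have P: "P \<noteq> {}" "finite P"
    using assms by (auto simp: P_def)
  have "P = (\<Union>a\<in>T. C a)"
    using first_in_mem[OF _ assms(2)] assms(3) unfolding C_def P_def by blast
  then have "card P = (\<Sum>a\<in>T. card (C a))"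
    using card_UN_disjoint[OF \<open>finite T\<close>, of C] P(2) unfolding C_def by auto
  also have "\<dots> = card T * card (C e)"
  proof -
    have "card (C a) = card (C e)" if "a \<in> T" for a
      using card_first_in_le[OF assms(1,2) that assms(3)] card_first_in_le[OF assms(1,2) assms(3) that]
      by (simp add: C_def P_def)
    then show ?thesis
      by simp
  qed
  finally have "card P = card T * card (C e)" .
  moreover have "P \<inter> {\<sigma>. first_in T \<sigma> = e} = C e"
    by (auto simp: C_def)
  ultimately show ?thesis
    using P by (auto simp: measure_pmf_of_set field_simps card_gt_0_iff P_def[symmetric])
qed

lemma greedy_keeps: "e \<in> R \<Longrightarrow> e \<in> greedy verts Y \<sigma> R"
  by (induction \<sigma> arbitrary: R) auto

lemma greedy_adds_first_among_conflicts:
  assumes "Y e" "e \<in> set \<sigma>" "e \<in> T" "first_in T \<sigma> = e"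
    and "\<forall>a\<in>set \<sigma>. a \<noteq> e \<and> Y a \<and> verts a \<inter> verts e \<noteq> {} \<longrightarrow> a \<in> T"
    and "\<forall>f\<in>R. verts f \<inter> verts e = {}"
  shows "e \<in> greedy verts Y \<sigma> R"
  using assms(2-)
proof (induction \<sigma> arbitrary: R)
  case Nil
  then show ?case by simp
next
  case (Cons a \<sigma>)
  show ?case
  proof (cases "a = e")
    case True
    then show ?thesis
      using Cons.prems \<open>Y e\<close> by (auto intro!: greedy_keeps simp: Int_commute)
  next
    case False
    then have "a \<notin> T"
      using Cons.prems by (auto simp: first_in_def split: if_splits)
    define R' where "R' = (if Y a \<and> (\<forall>f\<in>R. verts f \<inter> verts a = {}) then insert a R else R)"
    have "\<forall>f\<in>R'. verts f \<inter> verts e = {}"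
      using Cons.prems \<open>a \<notin> T\<close> False by (auto simp: R'_def)
    then have "e \<in> greedy verts Y \<sigma> R'"
      using Cons False \<open>a \<notin> T\<close> by (auto simp: first_in_def)
    then show ?thesis
      by (simp add: R'_def)
  qed
qed

lemma prob_greedy_adds_edge_ge:
  assumes "finite E" "e \<in> E" "Y e"
  shows "1 / (real (card {f\<in>E. f \<noteq> e \<and> verts f \<inter> verts e \<noteq> {} \<and> Y f}) + 1)
         \<le> measure_pmf.prob (pmf_of_set (permutations_of_set E)) {\<sigma>. e \<in> greedy verts Y \<sigma> {}}"
proof -
  define A where "A = {f\<in>E. f \<noteq> e \<and> verts f \<inter> verts e \<noteq> {} \<and> Y f}"
  define T where "T = insert e A"
  have "T \<subseteq> E"
    using assms by (auto simp: T_def A_def)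
  have "card T = card A + 1"
    using assms(1) by (simp add: T_def A_def)
  then have "1 / (real (card A) + 1)
             = measure_pmf.prob (pmf_of_set (permutations_of_set E)) {\<sigma>. first_in T \<sigma> = e}"
    using prob_first_in[OF assms(1) \<open>T \<subseteq> E\<close>] by (simp add: T_def)
  also have "\<dots> \<le> measure_pmf.prob (pmf_of_set (permutations_of_set E)) {\<sigma>. e \<in> greedy verts Y \<sigma> {}}"
  proof (rule measure_pmf.finite_measure_mono_AE[OF AE_pmfI])
    fix \<sigma> assume "\<sigma> \<in> set_pmf (pmf_of_set (permutations_of_set E))"
    then have "set \<sigma> = E"
      using assms(1) by (auto dest: permutations_of_setD)
    then show "\<sigma> \<in> {\<sigma>. first_in T \<sigma> = e} \<longrightarrow> \<sigma> \<in> {\<sigma>. e \<in> greedy verts Y \<sigma> {}}"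
      using assms by (auto intro!: greedy_adds_first_among_conflicts[where T=T] simp: T_def A_def)
  qed simp
  finally show ?thesis
    by (simp add: A_def)
qed

lemma inverse_succ_ge_tangent:
  fixes s m :: real
  assumes "0 \<le> s" "0 \<le> m"
  shows "(2 * m + 1 - s) / (m + 1)^2 \<le> 1 / (s + 1)"
proof -
  have "(2 * m + 1 - s) * (s + 1) \<le> (m + 1)^2"
    using zero_le_power2[of "s - m"] by (simp add: power2_eq_square algebra_simps)
  then show ?thesis
    using assms by (simp add: divide_simps)
qed

lemma neighbour_mass_le_card:
  assumes "hypergraph V E verts" "lp_feasible V E verts x" "e \<in> E"
  shows "(\<Sum>f\<in>{f\<in>E. f \<noteq> e \<and> verts f \<inter> verts e \<noteq> {}}. x f) \<le> real (card (verts e))"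
proof -
  define N where "N = {f\<in>E. f \<noteq> e \<and> verts f \<inter> verts e \<noteq> {}}"
  have "finite E" "verts e \<subseteq> V" "finite V"
    using assms by (auto simp: hypergraph_def)
  then have "finite (verts e)" "finite N"
    using finite_subset by (auto simp: N_def)
  have x_nonneg: "\<forall>f\<in>E. 0 \<le> x f" and vertex_mass: "\<forall>v\<in>V. (\<Sum>f\<in>{f\<in>E. v \<in> verts f}. x f) \<le> 1"
    using assms(2) by (auto simp: lp_feasible_def)
  have "(\<Sum>f\<in>N. x f) \<le> (\<Sum>f\<in>N. x f * real (card (verts e \<inter> verts f)))"
  proof (rule sum_mono)
    fix f assume "f \<in> N"
    then have "1 \<le> real (card (verts e \<inter> verts f))"
      using \<open>finite (verts e)\<close> by (auto simp: N_def Int_commute Suc_le_eq card_gt_0_iff)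
    then show "x f \<le> x f * real (card (verts e \<inter> verts f))"
      using mult_left_mono[of 1 _ "x f"] x_nonneg \<open>f \<in> N\<close> by (auto simp: N_def)
  qed
  also have "\<dots> = (\<Sum>f\<in>N. \<Sum>v\<in>verts e. if v \<in> verts f then x f else 0)"
    using \<open>finite (verts e)\<close> by (simp add: sum.inter_restrict[symmetric] mult.commute)
  also have "\<dots> = (\<Sum>v\<in>verts e. \<Sum>f\<in>{f\<in>N. v \<in> verts f}. x f)"
    using \<open>finite N\<close> by (subst sum.swap) (simp add: sum.inter_filter)
  also have "\<dots> \<le> (\<Sum>v\<in>verts e. 1)"
  proof (rule sum_mono)
    fix v assume "v \<in> verts e"
    have "(\<Sum>f\<in>{f\<in>N. v \<in> verts f}. x f) \<le> (\<Sum>f\<in>{f\<in>E. v \<in> verts f}. x f)"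
      using \<open>finite E\<close> x_nonneg by (intro sum_mono2) (auto simp: N_def)
    then show "(\<Sum>f\<in>{f\<in>N. v \<in> verts f}. x f) \<le> 1"
      using vertex_mass \<open>v \<in> verts e\<close> \<open>verts e \<subseteq> V\<close> by fastforce
  qed
  finally show ?thesis
    by (simp add: N_def)
qed

lemma prob_HM1_adds_edge_ge:
  assumes "hypergraph V E verts" "lp_feasible V E verts x" "e \<in> E"
  shows "x e / (real (card (verts e)) + 1) \<le> measure_pmf.prob (HM 1 E verts x) {R. e \<in> R}"
proof -
  define N where "N = {f\<in>E. f \<noteq> e \<and> verts f \<inter> verts e \<noteq> {}}"
  define m where "m = (\<Sum>f\<in>N. x f)"
  define coins where "coins = Pi_pmf E False (\<lambda>a. bernoulli_pmf (x a))"
  define count where "count = (\<lambda>Y. \<Sum>f\<in>N. if Y f then 1 else 0 :: real)"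
  define tangent where
    "tangent = (\<lambda>Y. ((2 * m + 1) * (if Y e then 1 else 0) - (if Y e then 1 else 0) * count Y) / (m + 1)^2)"
  define q where
    "q = (\<lambda>Y. measure_pmf.prob (pmf_of_set (permutations_of_set E)) {\<sigma>. e \<in> greedy verts Y \<sigma> {}})"
  have "finite E" "N \<subseteq> E - {e}"
    using assms(1) by (auto simp: hypergraph_def N_def)
  have x01: "\<forall>a\<in>E. 0 \<le> x a \<and> x a \<le> 1"
    using assms(2) by (auto simp: lp_feasible_def)
  then have "0 \<le> m"
    using \<open>N \<subseteq> E - {e}\<close> by (auto simp: m_def intro!: sum_nonneg)
  have tangent_le_q: "tangent Y \<le> q Y" for Y
  proof (cases "Y e")
    case True
    have "count Y = real (card {f\<in>E. f \<noteq> e \<and> verts f \<inter> verts e \<noteq> {} \<and> Y f})"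
      using \<open>finite E\<close> by (simp add: count_def N_def sum.If_cases Int_def conj_ac)
    then show ?thesis
      using inverse_succ_ge_tangent[of "count Y" m] \<open>0 \<le> m\<close>
        prob_greedy_adds_edge_ge[of E e Y verts, OF \<open>finite E\<close> assms(3) True]
      by (auto simp: tangent_def q_def count_def True sum_nonneg)
  qed (simp add: tangent_def q_def)
  have "x e / (real (card (verts e)) + 1) \<le> x e / (m + 1)"
    using neighbour_mass_le_card[OF assms] x01 assms(3) \<open>0 \<le> m\<close>
    by (intro divide_left_mono) (auto simp: m_def N_def)
  also have "\<dots> = ((2 * m + 1) * x e - x e * m) / (m + 1)^2"
    using \<open>0 \<le> m\<close> by (simp add: power2_eq_square divide_simps) (simp add: algebra_simps)
  also have "\<dots> = measure_pmf.expectation coins tangent"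
    using expectation_indicator_times_count_Pi_bernoulli[OF \<open>finite E\<close> assms(3) \<open>N \<subseteq> E - {e}\<close> x01]
      expectation_prod_indicators_Pi_bernoulli[OF \<open>finite E\<close> _ x01, of "{e}"] assms(3)
    by (simp add: tangent_def coins_def count_def m_def integrable_Pi_bernoulli \<open>finite E\<close>)
  also have "\<dots> \<le> measure_pmf.expectation coins q"
    unfolding coins_def by (intro integral_mono integrable_Pi_bernoulli \<open>finite E\<close> tangent_le_q)
  also have "\<dots> = measure_pmf.prob (HM 1 E verts x) {R. e \<in> R}"
    by (simp add: HM_def coins_def q_def measure_pmf_prob_bind_pmf map_pmf_def[symmetric] vimage_def)
  finally show ?thesis .
qed

theorem lemma7:
  "\<exists>g :: nat \<Rightarrow> real. g \<in> o(\<lambda>k. real k) \<and>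
     (\<forall>V E verts w x e. hypergraph V E verts \<longrightarrow> lp_optimal V E verts w x \<longrightarrow> e \<in> E \<longrightarrow>
        x e / (real (card (verts e)) + 1 + g (card (verts e)))
          \<le> measure_pmf.prob (HM 1 E verts x) {R. e \<in> R})"
  by (rule exI[of _ "\<lambda>_. 0"]) (auto simp: lp_optimal_def intro: prob_HM1_adds_edge_ge)

end
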